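(* Consider a random family with random number of children $N\ge 1$ and sexes $S_1,S_2,\dots\in\{\mathrm{M},\mathrm{F}\}$ of its children in birth order ($S_k$ defined on the event $N\ge k$). Assume: (i) (random coin toss) there is $p_M\in(0,1)$ such that $P(S_1=\mathrm{M})=p_M$ and, for every $k\ge 2$, $P(S_k=\mathrm{M}\mid N\ge k, S_1,\dots,S_{k-1})=p_M$; write $p_F=1-p_M$; (ii) the sex of the first child does not predict whether the family has a second child: $P(N\ge 2\mid S_1=\mathrm{M})=P(N\ge2\mid S_1=\mathrm{F})$; (iii) there are numbers $p_S>0$ and $p_D$ with $P(N\ge 3\mid N\ge 2, S_1=S_2=\mathrm{M})=P(N\ge 3\mid N\ge 2, S_1=S_2=\mathrm{F})=p_S$ and $P(N\ge 3\mid N\ge 2, S_1=\mathrm{M},S_2=\mathrm{F})=P(N\ge 3\mid N\ge 2, S_1=\mathrm{F},S_2=\mathrm{M})=p_D$. Then \[ P\left(\text{MM? or FF?}\mid N\geq 3\right) =\frac{1}{2 p_Fp_M p_D/p_S +p_F^2+p_M^2}\bigl(p_M^2+p_F^2\bigr). \] If additionally $p_S>p_D$, then \[ \frac{1}{2 p_Fp_M p_D/p_S +p_F^2+p_M^2}>1. \]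
   Context: All births are singletons. "MM?" denotes the event $S_1=S_2=\mathrm{M}$ (the sex of the third child is ignored), and "FF?" denotes $S_1=S_2=\mathrm{F}$; these are considered together with the conditioning event $N\ge 3$. All conditioning events appearing are assumed to have positive probability. *)

theory Defs
  imports "HOL-Probability.Probability"
begin

datatype sex = Male | Female

definition cprob :: "'a measure \<Rightarrow> 'a set \<Rightarrow> 'a set \<Rightarrow> real" where
  "cprob M A B = measure M (A \<inter> B) / measure M B"

end

theory Submission
  imports Defs
begin

(*
  Conditioning on the sex of the first child, hypothesis (ii) makes the event N >= 2 independent
  of S_1, and the coin-toss hypothesis then gives P(N >= 2, S_1 = s_1, S_2 = s_2) = p(s_1) p(s_2) q
  with q = P(N >= 2), p(M) = p_M and p(F) = p_F. Multiplying by the continuation probabilities p_S resp. p_D and summing over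
  the four sex pairs gives P(N >= 3) = q (p_S (p_M^2 + p_F^2) + 2 p_D p_M p_F) and
  P(MM? or FF?, N >= 3) = q p_S (p_M^2 + p_F^2), whose quotient is the claimed formula.
  Since (p_M + p_F)^2 = 1, the denominator is below 1 when p_D < p_S.
*)

lemma sex_neq_iff [simp]:
  "x \<noteq> Male \<longleftrightarrow> x = Female"
  "x \<noteq> Female \<longleftrightarrow> x = Male"
  by (cases x; simp)+

fun sex_weight :: "real \<Rightarrow> sex \<Rightarrow> real" where
  "sex_weight p Male = p"
| "sex_weight p Female = 1 - p"

lemma sex_weight_pos: "0 < p \<Longrightarrow> p < 1 \<Longrightarrow> 0 < sex_weight p s"
  by (cases s) simp_all

lemma cprob_nonneg: "0 \<le> cprob M A B"
  by (simp add: cprob_def)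

lemma measure_Int_eq_cprob_mult:
  assumes "cprob M A B = c" and "measure M B \<noteq> 0"
  shows "measure M (A \<inter> B) = c * measure M B"
  using assms by (auto simp: cprob_def field_simps)

lemma damped_binomial_square_pos:
  fixes p r :: real
  assumes "0 < p" "p < 1" "0 \<le> r"
  shows "0 < 2 * (1 - p) * p * r + (1 - p)\<^sup>2 + p\<^sup>2"
  using assms by (intro add_nonneg_pos) auto

lemma damped_binomial_square_lt_one:
  fixes p r :: real
  assumes "0 < p" "p < 1" "r < 1"
  shows "2 * (1 - p) * p * r + (1 - p)\<^sup>2 + p\<^sup>2 < 1"
proof -
  have "2 * (1 - p) * p * r < 2 * (1 - p) * p"
    using assms by simp
  moreover have "2 * (1 - p) * p + (1 - p)\<^sup>2 + p\<^sup>2 = 1"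
    by (simp add: power2_eq_square algebra_simps)
  ultimately show ?thesis
    by linarith
qed

lemma one_lt_inverse_damped_binomial_square:
  fixes p a b :: real
  assumes "0 < p" "p < 1" "0 \<le> b" "b < a"
  shows "1 < 1 / (2 * (1 - p) * p * b / a + (1 - p)\<^sup>2 + p\<^sup>2)"
proof -
  have "2 * (1 - p) * p * b / a = 2 * (1 - p) * p * (b / a)"
    by simp
  moreover have "0 \<le> b / a" "b / a < 1"
    using assms by simp_all
  ultimately show ?thesis
    using damped_binomial_square_pos[of p "b / a"] damped_binomial_square_lt_one[of p "b / a"] assms
    by simp
qed

context prob_space
begin

lemma prob_split_sex:
  fixes f :: "'a \<Rightarrow> sex"
  assumes [measurable]: "Measurable.pred M P" "f \<in> measurable M (count_space UNIV)"
  shows "prob {\<omega> \<in> space M. P \<omega>}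
    = prob {\<omega> \<in> space M. P \<omega> \<and> f \<omega> = Male} + prob {\<omega> \<in> space M. P \<omega> \<and> f \<omega> = Female}"
proof -
  have "{\<omega> \<in> space M. P \<omega>}
      = {\<omega> \<in> space M. P \<omega> \<and> f \<omega> = Male} \<union> {\<omega> \<in> space M. P \<omega> \<and> f \<omega> = Female}"
    by auto
  then show ?thesis
    by (simp only:) (rule finite_measure_Union; measurable?; auto)
qed

lemma prob_split_sex_pair:
  fixes f g :: "'a \<Rightarrow> sex"
  assumes [measurable]: "Measurable.pred M P"
    "f \<in> measurable M (count_space UNIV)" "g \<in> measurable M (count_space UNIV)"
  shows "prob {\<omega> \<in> space M. P \<omega>}
    = prob {\<omega> \<in> space M. P \<omega> \<and> f \<omega> = Male \<and> g \<omega> = Male}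
    + prob {\<omega> \<in> space M. P \<omega> \<and> f \<omega> = Male \<and> g \<omega> = Female}
    + prob {\<omega> \<in> space M. P \<omega> \<and> f \<omega> = Female \<and> g \<omega> = Male}
    + prob {\<omega> \<in> space M. P \<omega> \<and> f \<omega> = Female \<and> g \<omega> = Female}"
proof -
  have "prob {\<omega> \<in> space M. P \<omega> \<and> f \<omega> = s}
      = prob {\<omega> \<in> space M. P \<omega> \<and> f \<omega> = s \<and> g \<omega> = Male}
      + prob {\<omega> \<in> space M. P \<omega> \<and> f \<omega> = s \<and> g \<omega> = Female}" for s
    using prob_split_sex[of "\<lambda>\<omega>. P \<omega> \<and> f \<omega> = s" g] by (simp add: conj_assoc)
  then show ?thesis
    using prob_split_sex[of P f] by simp
qed

lemma prob_sex_eq_weight_mult: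
  fixes f :: "'a \<Rightarrow> sex"
  assumes [measurable]: "Measurable.pred M P" "f \<in> measurable M (count_space UNIV)"
    and male: "prob {\<omega> \<in> space M. P \<omega> \<and> f \<omega> = Male} = p * prob {\<omega> \<in> space M. P \<omega>}"
  shows "prob {\<omega> \<in> space M. P \<omega> \<and> f \<omega> = s} = sex_weight p s * prob {\<omega> \<in> space M. P \<omega>}"
  using male prob_split_sex[OF assms(1,2)] by (cases s) (simp_all add: algebra_simps)

lemma prob_Int_eq_mult_of_cprob_eq_compl:
  assumes "A \<in> events" "B \<in> events"
    and B_nonzero: "prob B \<noteq> 0" and compl_nonzero: "prob (space M - B) \<noteq> 0"
    and eq: "cprob M A B = cprob M A (space M - B)"
  shows "prob (A \<inter> B) = prob A * prob B"
proof -
  have in_B: "prob (A \<inter> B) = cprob M A B * prob B"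
    using measure_Int_eq_cprob_mult[OF refl B_nonzero] .
  have "prob (A \<inter> (space M - B)) = cprob M A B * prob (space M - B)"
    using measure_Int_eq_cprob_mult[OF eq[symmetric] compl_nonzero] .
  moreover have "A \<inter> (space M - B) = A - B"
    using sets.sets_into_space[OF \<open>A \<in> events\<close>] by blast
  ultimately have "prob A = cprob M A B"
    using in_B finite_measure_Diff'[OF assms(1,2)] prob_compl[OF assms(2)]
    by (simp add: algebra_simps)
  then show ?thesis
    using in_B by simp
qed

lemma prob_sex_eq_weight_mult_of_cprob:
  fixes f :: "'a \<Rightarrow> sex"
  assumes [measurable]: "Measurable.pred M P" "f \<in> measurable M (count_space UNIV)"
    and cond: "prob {\<omega> \<in> space M. P \<omega>} \<noteq> 0 \<Longrightarrow>
      cprob M {\<omega> \<in> space M. f \<omega> = Male} {\<omega> \<in> space M. P \<omega>} = p"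
  shows "prob {\<omega> \<in> space M. P \<omega> \<and> f \<omega> = s} = sex_weight p s * prob {\<omega> \<in> space M. P \<omega>}"
proof (cases "prob {\<omega> \<in> space M. P \<omega>} = 0")
  case True
  have "prob {\<omega> \<in> space M. P \<omega> \<and> f \<omega> = s} \<le> prob {\<omega> \<in> space M. P \<omega>}"
    by (intro finite_measure_mono) auto
  then show ?thesis
    using True measure_nonneg[of M] by (simp add: order_antisym)
next
  case False
  have "{\<omega> \<in> space M. f \<omega> = Male} \<inter> {\<omega> \<in> space M. P \<omega>} = {\<omega> \<in> space M. P \<omega> \<and> f \<omega> = Male}"
    by auto
  then have "prob {\<omega> \<in> space M. P \<omega> \<and> f \<omega> = Male} = p * prob {\<omega> \<in> space M. P \<omega>}"
    using measure_Int_eq_cprob_mult[OF cond[OF False] False] by simp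
  then show ?thesis
    by (rule prob_sex_eq_weight_mult[rotated 2]) simp_all
qed

lemma prob_sex_eq_weight_mult_of_cprob_eq:
  fixes f :: "'a \<Rightarrow> sex"
  assumes [measurable]: "Measurable.pred M Q" "f \<in> measurable M (count_space UNIV)"
    and p: "0 < p" "p < 1" and male: "prob {\<omega> \<in> space M. f \<omega> = Male} = p"
    and eq: "cprob M {\<omega> \<in> space M. Q \<omega>} {\<omega> \<in> space M. f \<omega> = Male}
      = cprob M {\<omega> \<in> space M. Q \<omega>} {\<omega> \<in> space M. f \<omega> = Female}"
  shows "prob {\<omega> \<in> space M. Q \<omega> \<and> f \<omega> = s} = sex_weight p s * prob {\<omega> \<in> space M. Q \<omega>}"
proof (rule prob_sex_eq_weight_mult[rotated 2])
  have compl: "space M - {\<omega> \<in> space M. f \<omega> = Male} = {\<omega> \<in> space M. f \<omega> = Female}"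
    by auto
  have "prob ({\<omega> \<in> space M. Q \<omega>} \<inter> {\<omega> \<in> space M. f \<omega> = Male})
      = prob {\<omega> \<in> space M. Q \<omega>} * prob {\<omega> \<in> space M. f \<omega> = Male}"
    using eq male p prob_compl[of "{\<omega> \<in> space M. f \<omega> = Male}"]
    by (intro prob_Int_eq_mult_of_cprob_eq_compl) (simp_all add: compl)
  moreover have "{\<omega> \<in> space M. Q \<omega>} \<inter> {\<omega> \<in> space M. f \<omega> = Male} = {\<omega> \<in> space M. Q \<omega> \<and> f \<omega> = Male}"
    by auto
  ultimately show "prob {\<omega> \<in> space M. Q \<omega> \<and> f \<omega> = Male} = p * prob {\<omega> \<in> space M. Q \<omega>}"
    using male by simp
qed simp_all

lemma prob_first_two_sexes:
  fixes N :: "'a \<Rightarrow> nat" and S :: "nat \<Rightarrow> 'a \<Rightarrow> sex" and p :: real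
  assumes [measurable]: "N \<in> measurable M (count_space UNIV)"
      "\<And>k. S k \<in> measurable M (count_space UNIV)"
    and p: "0 < p" "p < 1"
    and first: "prob {\<omega> \<in> space M. S 1 \<omega> = Male} = p"
    and second: "cprob M {\<omega> \<in> space M. N \<omega> \<ge> 2} {\<omega> \<in> space M. S 1 \<omega> = Male}
      = cprob M {\<omega> \<in> space M. N \<omega> \<ge> 2} {\<omega> \<in> space M. S 1 \<omega> = Female}"
    and coin2: "\<And>s. prob {\<omega> \<in> space M. N \<omega> \<ge> 2 \<and> S 1 \<omega> = s} \<noteq> 0 \<Longrightarrow>
      cprob M {\<omega> \<in> space M. S 2 \<omega> = Male} {\<omega> \<in> space M. N \<omega> \<ge> 2 \<and> S 1 \<omega> = s} = p"
  shows "prob {\<omega> \<in> space M. N \<omega> \<ge> 2 \<and> S 1 \<omega> = s\<^sub>1 \<and> S 2 \<omega> = s\<^sub>2}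
    = sex_weight p s\<^sub>1 * sex_weight p s\<^sub>2 * prob {\<omega> \<in> space M. N \<omega> \<ge> 2}"
proof -
  have "prob {\<omega> \<in> space M. N \<omega> \<ge> 2 \<and> S 1 \<omega> = s\<^sub>1 \<and> S 2 \<omega> = s\<^sub>2}
      = sex_weight p s\<^sub>2 * prob {\<omega> \<in> space M. N \<omega> \<ge> 2 \<and> S 1 \<omega> = s\<^sub>1}"
    using prob_sex_eq_weight_mult_of_cprob[of "\<lambda>\<omega>. N \<omega> \<ge> 2 \<and> S 1 \<omega> = s\<^sub>1" "S 2" p s\<^sub>2] coin2
    by (simp add: conj_assoc)
  also have "\<dots> = sex_weight p s\<^sub>2 * (sex_weight p s\<^sub>1 * prob {\<omega> \<in> space M. N \<omega> \<ge> 2})"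
    using prob_sex_eq_weight_mult_of_cprob_eq[of "\<lambda>\<omega>. N \<omega> \<ge> 2" "S 1" p s\<^sub>1] p first second
    by simp
  finally show ?thesis
    by simp
qed

lemma prob_ge_conj_eq_cprob_mult:
  fixes N :: "'a \<Rightarrow> nat"
  assumes [measurable]: "N \<in> measurable M (count_space UNIV)" "Measurable.pred M P"
    and "n \<le> m"
    and cond: "cprob M {\<omega> \<in> space M. N \<omega> \<ge> m} {\<omega> \<in> space M. N \<omega> \<ge> n \<and> P \<omega>} = c"
  shows "prob {\<omega> \<in> space M. N \<omega> \<ge> m \<and> P \<omega>} = c * prob {\<omega> \<in> space M. N \<omega> \<ge> n \<and> P \<omega>}"
proof (cases "prob {\<omega> \<in> space M. N \<omega> \<ge> n \<and> P \<omega>} = 0")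
  case True
  have "prob {\<omega> \<in> space M. N \<omega> \<ge> m \<and> P \<omega>} \<le> prob {\<omega> \<in> space M. N \<omega> \<ge> n \<and> P \<omega>}"
    using \<open>n \<le> m\<close> by (intro finite_measure_mono) auto
  then show ?thesis
    using True measure_nonneg[of M] by (simp add: order_antisym)
next
  case False
  have "{\<omega> \<in> space M. N \<omega> \<ge> m} \<inter> {\<omega> \<in> space M. N \<omega> \<ge> n \<and> P \<omega>}
      = {\<omega> \<in> space M. N \<omega> \<ge> m \<and> P \<omega>}"
    using \<open>n \<le> m\<close> by auto
  then show ?thesis
    using measure_Int_eq_cprob_mult[OF cond False] by simp
qed

lemma cprob_same_sex_eq:
  fixes f g :: "'a \<Rightarrow> sex" and p a b q :: real
  assumes [measurable]: "Measurable.pred M P"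
    "f \<in> measurable M (count_space UNIV)" "g \<in> measurable M (count_space UNIV)"
    and pair: "\<And>s t. prob {\<omega> \<in> space M. P \<omega> \<and> f \<omega> = s \<and> g \<omega> = t}
      = (if s = t then a else b) * (sex_weight p s * sex_weight p t * q)"
    and p: "0 < p" "p < 1" and "0 < a" "0 \<le> b" "0 < q"
  shows "cprob M {\<omega> \<in> space M. f \<omega> = g \<omega>} {\<omega> \<in> space M. P \<omega>}
    = 1 / (2 * (1 - p) * p * b / a + (1 - p)\<^sup>2 + p\<^sup>2) * (p\<^sup>2 + (1 - p)\<^sup>2)"
proof -
  define D where "D = 2 * (1 - p) * p * b / a + (1 - p)\<^sup>2 + p\<^sup>2"
  have "prob {\<omega> \<in> space M. P \<omega>} = q * (a * (p\<^sup>2 + (1 - p)\<^sup>2) + 2 * b * p * (1 - p))"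
    using prob_split_sex_pair[of P f g] pair by (simp add: power2_eq_square algebra_simps)
  also have "\<dots> = q * a * D"
    unfolding D_def using \<open>0 < a\<close> by (simp add: field_simps)
  finally have total: "prob {\<omega> \<in> space M. P \<omega>} = q * a * D" .
  have "{\<omega> \<in> space M. f \<omega> = g \<omega>} \<inter> {\<omega> \<in> space M. P \<omega>}
      = {\<omega> \<in> space M. P \<omega> \<and> f \<omega> = Male \<and> g \<omega> = Male}
      \<union> {\<omega> \<in> space M. P \<omega> \<and> f \<omega> = Female \<and> g \<omega> = Female}"
    by auto
  then have same: "prob ({\<omega> \<in> space M. f \<omega> = g \<omega>} \<inter> {\<omega> \<in> space M. P \<omega>})
      = q * a * (p\<^sup>2 + (1 - p)\<^sup>2)"
    using finite_measure_Union[of "{\<omega> \<in> space M. P \<omega> \<and> f \<omega> = Male \<and> g \<omega> = Male}"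
        "{\<omega> \<in> space M. P \<omega> \<and> f \<omega> = Female \<and> g \<omega> = Female}"] pair
    by (simp add: disjoint_iff power2_eq_square algebra_simps)
  have "0 < D"
    unfolding D_def using damped_binomial_square_pos[of p "b / a"] assms by simp
  then show ?thesis
    unfolding cprob_def same total D_def[symmetric] using \<open>0 < a\<close> \<open>0 < q\<close> by simp
qed

end

theorem theorem2:
  fixes M :: "'a measure"
    and N :: "'a \<Rightarrow> nat"
    and S :: "nat \<Rightarrow> 'a \<Rightarrow> sex"
    and pM pF pS pD :: real
  assumes ps: "prob_space M"
    and N_meas: "N \<in> measurable M (count_space UNIV)"
    and S_meas: "\<And>k. S k \<in> measurable M (count_space UNIV)"
    and N_ge1: "\<And>\<omega>. \<omega> \<in> space M \<Longrightarrow> N \<omega> \<ge> 1"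
    and pM: "0 < pM" "pM < 1"
    and pF: "pF = 1 - pM"
    and coin1: "measure M {\<omega> \<in> space M. S 1 \<omega> = Male} = pM"
    and coin: "\<And>k s. k \<ge> 2 \<Longrightarrow>
        measure M {\<omega> \<in> space M. N \<omega> \<ge> k \<and> (\<forall>j\<in>{1..<k}. S j \<omega> = s j)} > 0 \<Longrightarrow>
        cprob M {\<omega> \<in> space M. S k \<omega> = Male}
                {\<omega> \<in> space M. N \<omega> \<ge> k \<and> (\<forall>j\<in>{1..<k}. S j \<omega> = s j)} = pM"
    and second: "cprob M {\<omega> \<in> space M. N \<omega> \<ge> 2} {\<omega> \<in> space M. S 1 \<omega> = Male}
               = cprob M {\<omega> \<in> space M. N \<omega> \<ge> 2} {\<omega> \<in> space M. S 1 \<omega> = Female}"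
    and pos_MM: "measure M {\<omega> \<in> space M. N \<omega> \<ge> 2 \<and> S 1 \<omega> = Male \<and> S 2 \<omega> = Male} > 0"
    and pos_FF: "measure M {\<omega> \<in> space M. N \<omega> \<ge> 2 \<and> S 1 \<omega> = Female \<and> S 2 \<omega> = Female} > 0"
    and pos_MF: "measure M {\<omega> \<in> space M. N \<omega> \<ge> 2 \<and> S 1 \<omega> = Male \<and> S 2 \<omega> = Female} > 0"
    and pos_FM: "measure M {\<omega> \<in> space M. N \<omega> \<ge> 2 \<and> S 1 \<omega> = Female \<and> S 2 \<omega> = Male} > 0"
    and pos_N3: "measure M {\<omega> \<in> space M. N \<omega> \<ge> 3} > 0"
    and pS_pos: "pS > 0"
    and SS_MM: "cprob M {\<omega> \<in> space M. N \<omega> \<ge> 3}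
                  {\<omega> \<in> space M. N \<omega> \<ge> 2 \<and> S 1 \<omega> = Male \<and> S 2 \<omega> = Male} = pS"
    and SS_FF: "cprob M {\<omega> \<in> space M. N \<omega> \<ge> 3}
                  {\<omega> \<in> space M. N \<omega> \<ge> 2 \<and> S 1 \<omega> = Female \<and> S 2 \<omega> = Female} = pS"
    and DD_MF: "cprob M {\<omega> \<in> space M. N \<omega> \<ge> 3}
                  {\<omega> \<in> space M. N \<omega> \<ge> 2 \<and> S 1 \<omega> = Male \<and> S 2 \<omega> = Female} = pD"
    and DD_FM: "cprob M {\<omega> \<in> space M. N \<omega> \<ge> 3}
                  {\<omega> \<in> space M. N \<omega> \<ge> 2 \<and> S 1 \<omega> = Female \<and> S 2 \<omega> = Male} = pD"
  shows "cprob M {\<omega> \<in> space M. S 1 \<omega> = S 2 \<omega>} {\<omega> \<in> space M. N \<omega> \<ge> 3}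
           = 1 / (2 * pF * pM * pD / pS + pF\<^sup>2 + pM\<^sup>2) * (pM\<^sup>2 + pF\<^sup>2)
         \<and> (pS > pD \<longrightarrow> 1 / (2 * pF * pM * pD / pS + pF\<^sup>2 + pM\<^sup>2) > 1)"
proof -
  interpret prob_space M by (rule ps)
  note [measurable] = N_meas S_meas
  define q where "q = prob {\<omega> \<in> space M. N \<omega> \<ge> 2}"
  have coin2: "cprob M {\<omega> \<in> space M. S 2 \<omega> = Male} {\<omega> \<in> space M. N \<omega> \<ge> 2 \<and> S 1 \<omega> = s} = pM"
    if "prob {\<omega> \<in> space M. N \<omega> \<ge> 2 \<and> S 1 \<omega> = s} \<noteq> 0" for s
  proof -
    have "{1..<2::nat} = {1}" by auto
    then show ?thesis
      using coin[of 2 "\<lambda>_. s"] that by (simp add: less_le)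
  qed
  have two: "prob {\<omega> \<in> space M. N \<omega> \<ge> 2 \<and> S 1 \<omega> = s\<^sub>1 \<and> S 2 \<omega> = s\<^sub>2}
      = sex_weight pM s\<^sub>1 * sex_weight pM s\<^sub>2 * q" for s\<^sub>1 s\<^sub>2
    unfolding q_def by (rule prob_first_two_sexes[OF N_meas S_meas pM coin1 second coin2])
  have q_pos: "q > 0"
    using pos_MM two[of Male Male] pM by (simp add: zero_less_mult_iff)
  have continuation: "cprob M {\<omega> \<in> space M. N \<omega> \<ge> 3}
      {\<omega> \<in> space M. N \<omega> \<ge> 2 \<and> S 1 \<omega> = s \<and> S 2 \<omega> = t} = (if s = t then pS else pD)" for s t
    using SS_MM SS_FF DD_MF DD_FM by (cases s; cases t) simp_all
  have ge3_pair: "prob {\<omega> \<in> space M. N \<omega> \<ge> 3 \<and> S 1 \<omega> = s \<and> S 2 \<omega> = t}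
      = (if s = t then pS else pD) * (sex_weight pM s * sex_weight pM t * q)" for s t
    using prob_ge_conj_eq_cprob_mult[OF N_meas _ _ continuation[of s t]] two by simp
  have "0 \<le> pD"
    unfolding DD_MF[symmetric] by (rule cprob_nonneg)
  then show ?thesis
    unfolding pF
    using cprob_same_sex_eq[of "\<lambda>\<omega>. N \<omega> \<ge> 3" "S 1" "S 2", OF _ _ _ ge3_pair pM pS_pos _ q_pos]
      one_lt_inverse_damped_binomial_square[OF pM] pS_pos
    by simp
qed

end
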